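(* The asynchronous iteration corresponding to the synchronous block ILU fixed-point iteration $\mathbf{x}^{n+1} = \mathbf{h}(\mathbf{x}^n)$ is locally convergent, ie., if $\mathbf{x}_*$ is a fixed point of the asynchronous iteration, it is a point of attraction of the iteration.
   Context: Let $\mathbf{A}\in\mathbb{R}^{n\times n}$ be partitioned into square $b\times b$ blocks, and $S_B$ a set of block indices containing all diagonal blocks. The unknowns (entries of the block ILU factors $\mathbf{L}_{ij}$, $i>j$, and $\mathbf{U}_{ij}$, $i\le j$, for $(i,j)\in S_B$) form $\mathbf{x}\in\mathbb{R}^m$, $m=|S_B|b^2$, with $\mathbf{X}_{ij}$ the $b\times b$ block for index $(i,j)$ and $\beta_B:S_B\to\{1,\dots,m/b^2\}$ a bijective block ordering. The map $\mathbf{h}:D_B\to\mathbb{R}^m$ is given blockwise by $\mathbf{H}_{ij}(\mathbf{x})=(\mathbf{A}_{ij}-\sum_{k=1}^{j-1}\mathbf{X}_{ik}\mathbf{X}_{kj})\mathbf{X}_{jj}^{-1}$ for $i>j$ and $\mathbf{H}_{ij}(\mathbf{x})=\mathbf{A}_{ij}-\sum_{k=1}^{i-1}\mathbf{X}_{ik}\mathbf{X}_{kj}$ for $i\le j$, on $D_B:=\{\mathbf{x}: \mathbf{X}_{jj}\text{ nonsingular for all diagonal blocks}\}$. The asynchronous (block-asynchronous) iteration is $\mathbf{X}_{ij}^{k+1}=\mathbf{H}_{ij}(x_1^{k-s_1(k)},\dots,x_m^{k-s_m(k)})$ if $\beta_B(i,j)=u(k)$ and $\mathbf{X}_{ij}^{k+1}=\mathbf{X}_{ij}^k$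 otherwise, where the shifts satisfy $0\le s_i(k)\le\min\{k-1,\hat s\}$ for a fixed $\hat s\in\mathbb{N}$, and the update function $u:\mathbb{N}\to\{1,\dots,m/b^2\}$ satisfies: for every $i$ and $k$ there exists $l>k$ with $u(l)=i$. *)

theory Defs
  imports "HOL-Analysis.Analysis"
begin

(* Block size b = CARD('b); a b x b block is a "real^'b^'b".
   Block indices are 0-based: (i,j) with i,j < N (N = number of block rows).
   An unknown vector x \<in> R^m is represented blockwise as a function
   (i,j) \<mapsto> X_ij; only the blocks with (i,j) \<in> S_B are meaningful. *)

definition blk_of :: "(nat \<times> nat) set \<Rightarrow> (nat \<times> nat \<Rightarrow> real^'b^'b) \<Rightarrow> nat \<Rightarrow> nat \<Rightarrow> real^'b^'b" where
  "blk_of S x i k = (if (i, k) \<in> S then x (i, k) else 0)"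

definition bilu_H :: "(nat \<times> nat \<Rightarrow> real^'b^'b) \<Rightarrow> (nat \<times> nat) set
     \<Rightarrow> (nat \<times> nat \<Rightarrow> real^'b^'b) \<Rightarrow> nat \<times> nat \<Rightarrow> real^'b^'b" where
  "bilu_H A S x ij = (case ij of (i, j) \<Rightarrow>
     if j < i then (A (i, j) - (\<Sum>k<j. blk_of S x i k ** blk_of S x k j)) ** matrix_inv (x (j, j))
     else A (i, j) - (\<Sum>k<i. blk_of S x i k ** blk_of S x k j))"

definition in_DB :: "nat \<Rightarrow> (nat \<times> nat \<Rightarrow> real^'b^'b) \<Rightarrow> bool" where
  "in_DB N x = (\<forall>j<N. invertible (x (j, j)))"

(* the delayed argument (x_1^{k-s_1(k)}, ..., x_m^{k-s_m(k)}); one shift per scalar unknown,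
   the scalar unknown being entry (p,q) of block (i,j) *)
definition async_mix :: "(nat \<times> nat \<Rightarrow> 'b \<Rightarrow> 'b \<Rightarrow> nat \<Rightarrow> nat) \<Rightarrow> (nat \<Rightarrow> nat \<times> nat \<Rightarrow> real^'b^'b)
     \<Rightarrow> nat \<Rightarrow> nat \<times> nat \<Rightarrow> real^'b^'b" where
  "async_mix s x k = (\<lambda>ij. \<chi> p q. x (k - s ij p q k) ij $ p $ q)"

definition admissible_shifts :: "(nat \<times> nat) set \<Rightarrow> nat \<Rightarrow> (nat \<times> nat \<Rightarrow> 'b \<Rightarrow> 'b \<Rightarrow> nat \<Rightarrow> nat) \<Rightarrow> bool" where
  "admissible_shifts S shat s = (\<forall>ij\<in>S. \<forall>p q. \<forall>k\<ge>1. s ij p q k \<le> min (k - 1) shat)"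

definition admissible_update :: "(nat \<times> nat) set \<Rightarrow> (nat \<Rightarrow> nat) \<Rightarrow> bool" where
  "admissible_update S u = ((\<forall>k\<ge>1. u k \<in> {1..card S}) \<and> (\<forall>i\<in>{1..card S}. \<forall>k. \<exists>l>k. u l = i))"

(* x is a run of the block-asynchronous iteration (iteration indices k = 1,2,...; x 1 is the start) *)
definition is_async_iter :: "(nat \<times> nat \<Rightarrow> real^'b^'b) \<Rightarrow> (nat \<times> nat) set \<Rightarrow> (nat \<times> nat \<Rightarrow> nat)
     \<Rightarrow> (nat \<times> nat \<Rightarrow> 'b \<Rightarrow> 'b \<Rightarrow> nat \<Rightarrow> nat) \<Rightarrow> (nat \<Rightarrow> nat) \<Rightarrow> (nat \<Rightarrow> nat \<times> nat \<Rightarrow> real^'b^'b) \<Rightarrow> bool" where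
  "is_async_iter A S beta s u x =
     (\<forall>k\<ge>1. \<forall>ij\<in>S. x (Suc k) ij =
        (if beta ij = u k then bilu_H A S (async_mix s x k) ij else x k ij))"

end

theory Submission
  imports Defs
begin

(*
  Grade the blocks by the level 2 min(i,j) + [j < i]. The block H_ij(x) only reads blocks of
  strictly smaller level, so h is "level-triangular", a nonlinear form of a nilpotent Jacobian.
  Both parts of the theorem then follow by induction on the level, using only that the delays
  are bounded and that every block is updated infinitely often.

  Exactness: once all blocks below level L have been exact for shat steps, each block of level
  L becomes exact at its next update and stays exact. Hence the iteration reaches x_* after
  finitely many steps.

  Stability: h is continuous at x_* because the diagonal blocks of x_* are invertible. This gives
  radii, chosen level by level, such that an iteration started close enough to x_* stays as close
  to x_* as desired, in particular inside the neighbourhood where all diagonal blocks are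
  invertible.
*)

lemma tendsto_matrix_matrix_mult:
  fixes f :: "'a \<Rightarrow> 'r::real_normed_algebra_1^'n^'m" and g :: "'a \<Rightarrow> 'r^'k^'n"
  assumes "(f \<longlongrightarrow> A) F" and "(g \<longlongrightarrow> B) F"
  shows "((\<lambda>t. f t ** g t) \<longlongrightarrow> A ** B) F"
  unfolding matrix_matrix_mult_def
  by (intro tendsto_vec_lambda tendsto_sum tendsto_mult tendsto_vec_nth assms)

lemma tendsto_det:
  fixes f :: "'a \<Rightarrow> 'r::{real_normed_algebra_1,comm_ring_1}^'n^'n"
  assumes "(f \<longlongrightarrow> A) F"
  shows "((\<lambda>t. det (f t)) \<longlongrightarrow> det A) F"
  unfolding det_def
  by (intro tendsto_sum tendsto_mult tendsto_prod tendsto_const tendsto_vec_nth assms)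

lemma matrix_inv_cramer:
  fixes A :: "'a::field^'n^'n"
  assumes "invertible A"
  shows "matrix_inv A = (\<chi> k j. det (\<chi> i l. if l = k then (if i = j then 1 else 0) else A $ i $ l) / det A)"
proof -
  have right_inverse: "A ** matrix_inv A = mat 1"
    using assms unfolding invertible_def matrix_inv_def by (rule someI2_ex) auto
  have "det A \<noteq> 0"
    using assms invertible_det_nz by blast
  have "matrix_inv A $ k $ j = det (\<chi> i l. if l = k then (if i = j then 1 else 0) else A $ i $ l) / det A"
    for k j
  proof -
    have "A *v (matrix_inv A *v axis j 1) = axis j 1"
      by (simp add: matrix_vector_mul_assoc right_inverse)
    then have "matrix_inv A *v axis j 1 = (\<chi> k. det (\<chi> i l. if l = k then axis j 1 $ i else A $ i $ l) / det A)"
      using cramer[OF \<open>det A \<noteq> 0\<close>] by blast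
    moreover have "(matrix_inv A *v axis j 1) $ k = matrix_inv A $ k $ j"
      by (simp add: matrix_vector_mult_def axis_def if_distrib cong: if_cong)
    moreover have "(\<chi> i l. if l = k then axis j 1 $ i else A $ i $ l) =
        (\<chi> i l. if l = k then (if i = j then 1 else 0) else A $ i $ l)"
      by (simp add: vec_eq_iff axis_def)
    ultimately show ?thesis
      by simp
  qed
  then show ?thesis
    by (simp add: vec_eq_iff)
qed

lemma tendsto_matrix_inv:
  fixes f :: "'a \<Rightarrow> 'r::real_normed_field^'n^'n"
  assumes "(f \<longlongrightarrow> A) F" and "invertible A"
  shows "((\<lambda>t. matrix_inv (f t)) \<longlongrightarrow> matrix_inv A) F"
proof -
  let ?cramer = "\<lambda>B::'r^'n^'n. \<chi> k j. det (\<chi> i l. if l = k then (if i = j then 1 else 0) else B $ i $ l) / det B"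
  have "det A \<noteq> 0"
    using assms(2) invertible_det_nz by blast
  then have "eventually (\<lambda>t. det (f t) \<noteq> 0) F"
    using tendsto_imp_eventually_ne tendsto_det[OF assms(1)] by blast
  then have "eventually (\<lambda>t. ?cramer (f t) = matrix_inv (f t)) F"
    by (rule eventually_mono) (simp add: matrix_inv_cramer invertible_det_nz)
  moreover have "((\<lambda>t. ?cramer (f t)) \<longlongrightarrow> ?cramer A) F"
  proof (intro tendsto_vec_lambda tendsto_divide tendsto_det \<open>det A \<noteq> 0\<close> assms(1))
    fix k j i l
    show "((\<lambda>t. if l = k then (if i = j then 1 else 0) else f t $ i $ l) \<longlongrightarrow>
            (if l = k then (if i = j then 1 else 0) else A $ i $ l)) F"
      by (cases "l = k") (auto intro!: tendsto_vec_nth assms(1))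
  qed
  ultimately show ?thesis
    using Lim_transform_eventually matrix_inv_cramer[OF assms(2)] by fastforce
qed

(* Closeness is measured entrywise because delays act on single scalar unknowns: a delayed
   mixture of iterates that are entrywise r-close to a point is again entrywise r-close. *)
definition blockwise_close :: "'i set \<Rightarrow> real \<Rightarrow> ('i \<Rightarrow> real^'n^'m) \<Rightarrow> ('i \<Rightarrow> real^'n^'m) \<Rightarrow> bool" where
  "blockwise_close I r x y \<longleftrightarrow> (\<forall>ab\<in>I. \<forall>p q. \<bar>x ab $ p $ q - y ab $ p $ q\<bar> < r)"

lemma blockwise_close_mono:
  assumes "blockwise_close I r x y" and "J \<subseteq> I" and "r \<le> r'"
  shows "blockwise_close J r' x y"
  using assms unfolding blockwise_close_def by (meson less_le_trans subsetD)

lemma blockwise_close_if_dist_less: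
  assumes "\<forall>ab\<in>I. dist (x ab) (y ab) < r"
  shows "blockwise_close I r x y"
  unfolding blockwise_close_def
proof (intro ballI allI)
  fix ab p q
  assume "ab \<in> I"
  have "\<bar>x ab $ p $ q - y ab $ p $ q\<bar> \<le> dist (x ab $ p) (y ab $ p)"
    using dist_vec_nth_le by (metis dist_real_def)
  also have "\<dots> \<le> dist (x ab) (y ab)"
    by (rule dist_vec_nth_le)
  finally show "\<bar>x ab $ p $ q - y ab $ p $ q\<bar> < r"
    using assms \<open>ab \<in> I\<close> by fastforce
qed

lemma sequentially_imp_blockwise_close:
  fixes x :: "'i \<Rightarrow> real^'n^'m"
  assumes "\<And>y. \<forall>ab\<in>I. (\<lambda>n. y n ab) \<longlonglongrightarrow> x ab \<Longrightarrow> eventually (\<lambda>n. P (y n)) sequentially"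
  shows "\<exists>\<delta>>0. \<forall>z. blockwise_close I \<delta> z x \<longrightarrow> P z"
proof (rule ccontr)
  assume "\<not> ?thesis"
  then have "\<forall>n. \<exists>z. blockwise_close I (1 / real (Suc n)) z x \<and> \<not> P z"
    by (metis of_nat_0_less_iff zero_less_Suc zero_less_divide_1_iff)
  then obtain y where y: "\<And>n. blockwise_close I (1 / real (Suc n)) (y n) x" "\<And>n. \<not> P (y n)"
    by metis
  have "(\<lambda>n. y n ab) \<longlonglongrightarrow> x ab" if "ab \<in> I" for ab
  proof (intro vec_tendstoI)
    fix p q
    have "(\<lambda>n. y n ab $ p $ q - x ab $ p $ q) \<longlonglongrightarrow> 0"
    proof (rule Lim_null_comparison)
      show "\<forall>\<^sub>F n in sequentially. norm (y n ab $ p $ q - x ab $ p $ q) \<le> inverse (real (Suc n))"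
        using y(1) \<open>ab \<in> I\<close>
        by (auto simp: blockwise_close_def less_imp_le divide_inverse intro!: always_eventually)
    qed (rule LIMSEQ_inverse_real_of_nat)
    then show "(\<lambda>n. y n ab $ p $ q) \<longlonglongrightarrow> x ab $ p $ q"
      by (rule LIM_zero_cancel)
  qed
  with assms obtain n where "P (y n)"
    by (metis eventually_sequentially order_refl)
  with y(2) show False
    by blast
qed

lemma eventually_blockwise_close:
  fixes x :: "'i \<Rightarrow> real^'n^'m"
  assumes "finite I" and "\<forall>ab\<in>I. ((\<lambda>t. y t ab) \<longlongrightarrow> x ab) F" and "\<epsilon> > 0"
  shows "eventually (\<lambda>t. blockwise_close I \<epsilon> (y t) x) F"
  unfolding blockwise_close_def
proof (intro eventually_ball_finite \<open>finite I\<close> ballI eventually_all_finite)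
  fix ab p q
  assume "ab \<in> I"
  then have "((\<lambda>t. y t ab $ p $ q) \<longlongrightarrow> x ab $ p $ q) F"
    using assms(2) by (intro tendsto_vec_nth) blast
  from tendstoD[OF this \<open>\<epsilon> > 0\<close>]
  show "\<forall>\<^sub>F t in F. \<bar>y t ab $ p $ q - x ab $ p $ q\<bar> < \<epsilon>"
    by (simp add: dist_real_def)
qed

lemma tendsto_blk_of:
  assumes "\<forall>ab\<in>S. ((\<lambda>t. y t ab) \<longlongrightarrow> x ab) F"
  shows "((\<lambda>t. blk_of S (y t) i k) \<longlongrightarrow> blk_of S x i k) F"
  using assms by (cases "(i, k) \<in> S") (auto simp: blk_of_def)

lemma tendsto_bilu_H:
  fixes y :: "'a \<Rightarrow> nat \<times> nat \<Rightarrow> real^'b^'b"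
  assumes "\<forall>ab\<in>S. ((\<lambda>t. y t ab) \<longlongrightarrow> x ab) F"
    and "j < i \<Longrightarrow> (j, j) \<in> S \<and> invertible (x (j, j))"
  shows "((\<lambda>t. bilu_H A S (y t) (i, j)) \<longlongrightarrow> bilu_H A S x (i, j)) F"
proof (cases "j < i")
  case True
  then have "((\<lambda>t. matrix_inv (y t (j, j))) \<longlongrightarrow> matrix_inv (x (j, j))) F"
    using assms by (intro tendsto_matrix_inv) auto
  with True show ?thesis
    unfolding bilu_H_def
    by (auto intro!: tendsto_matrix_matrix_mult tendsto_diff tendsto_sum tendsto_blk_of assms(1))
next
  case False
  then show ?thesis
    unfolding bilu_H_def
    by (auto intro!: tendsto_matrix_matrix_mult tendsto_diff tendsto_sum tendsto_blk_of assms(1))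
qed

lemma bilu_H_blockwise_continuous:
  fixes x :: "nat \<times> nat \<Rightarrow> real^'b^'b"
  assumes "finite S"
    and "\<And>i j. (i, j) \<in> S \<Longrightarrow> j < i \<Longrightarrow> (j, j) \<in> S \<and> invertible (x (j, j))"
    and "\<epsilon> > 0"
  shows "\<exists>\<delta>>0. \<forall>z. blockwise_close S \<delta> z x \<longrightarrow> blockwise_close S \<epsilon> (bilu_H A S z) (bilu_H A S x)"
proof (rule sequentially_imp_blockwise_close)
  fix y :: "nat \<Rightarrow> nat \<times> nat \<Rightarrow> real^'b^'b"
  assume "\<forall>ab\<in>S. (\<lambda>n. y n ab) \<longlonglongrightarrow> x ab"
  then have "\<forall>ij\<in>S. (\<lambda>n. bilu_H A S (y n) ij) \<longlonglongrightarrow> bilu_H A S x ij"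
    using assms(2) by (auto intro: tendsto_bilu_H)
  then show "eventually (\<lambda>n. blockwise_close S \<epsilon> (bilu_H A S (y n)) (bilu_H A S x)) sequentially"
    by (rule eventually_blockwise_close[OF \<open>finite S\<close> _ \<open>\<epsilon> > 0\<close>])
qed

lemma in_DB_blockwise_neighbourhood:
  fixes x :: "nat \<times> nat \<Rightarrow> real^'b^'b"
  assumes "\<forall>j<N. (j, j) \<in> S" and "in_DB N x"
  shows "\<exists>\<rho>>0. \<forall>z. blockwise_close S \<rho> z x \<longrightarrow> in_DB N z"
proof (rule sequentially_imp_blockwise_close)
  fix y :: "nat \<Rightarrow> nat \<times> nat \<Rightarrow> real^'b^'b"
  assume y: "\<forall>ab\<in>S. (\<lambda>n. y n ab) \<longlonglongrightarrow> x ab"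
  have "eventually (\<lambda>n. invertible (y n (j, j))) sequentially" if "j < N" for j
  proof -
    have "(\<lambda>n. det (y n (j, j))) \<longlonglongrightarrow> det (x (j, j))"
      using y assms(1) \<open>j < N\<close> by (intro tendsto_det) auto
    moreover have "det (x (j, j)) \<noteq> 0"
      using assms(2) \<open>j < N\<close> by (simp add: in_DB_def invertible_det_nz)
    ultimately show ?thesis
      by (auto dest: tendsto_imp_eventually_ne elim: eventually_mono simp: invertible_det_nz)
  qed
  then have "eventually (\<lambda>n. \<forall>j\<in>{..<N}. invertible (y n (j, j))) sequentially"
    by (intro eventually_ball_finite) auto
  then show "eventually (\<lambda>n. in_DB N (y n)) sequentially"
    by (rule eventually_mono) (simp add: in_DB_def)
qed

definition level_triangular :: "(('i \<Rightarrow> 'v) \<Rightarrow> 'i \<Rightarrow> 'v) \<Rightarrow> 'i set \<Rightarrow> ('i \<Rightarrow> nat) \<Rightarrow> bool" where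
  "level_triangular H S lev \<longleftrightarrow>
     (\<forall>ij\<in>S. \<forall>x y. (\<forall>ab\<in>S. lev ab < lev ij \<longrightarrow> x ab = y ab) \<longrightarrow> H x ij = H y ij)"

(* H_ij reads X_ik and X_kj for k < min i j, and X_jj if j < i; all of these have a
   smaller level. *)
fun bilu_level :: "nat \<times> nat \<Rightarrow> nat" where
  "bilu_level (i, j) = 2 * min i j + (if j < i then 1 else 0)"

lemma bilu_H_level_triangular:
  fixes A :: "nat \<times> nat \<Rightarrow> real^'b^'b"
  assumes "\<And>i j. (i, j) \<in> S \<Longrightarrow> j < i \<Longrightarrow> (j, j) \<in> S"
  shows "level_triangular (bilu_H A S) S bilu_level"
  unfolding level_triangular_def
proof (intro ballI allI impI)
  fix ij and x y :: "nat \<times> nat \<Rightarrow> real^'b^'b"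
  assume "ij \<in> S" and agree: "\<forall>ab\<in>S. bilu_level ab < bilu_level ij \<longrightarrow> x ab = y ab"
  obtain i j where ij: "ij = (i, j)"
    by fastforce
  have "blk_of S x i k = blk_of S y i k" and "blk_of S x k j = blk_of S y k j" if "k < min i j" for k
    using agree that by (auto simp: blk_of_def ij)
  moreover have "x (j, j) = y (j, j)" if "j < i"
    using agree assms \<open>ij \<in> S\<close> that by (auto simp: ij)
  ultimately show "bilu_H A S x ij = bilu_H A S y ij"
    unfolding bilu_H_def ij by (auto intro!: sum.cong arg_cong2[where f = "(-)"])
qed

definition async_iteration :: "((nat \<times> nat \<Rightarrow> real^'b^'b) \<Rightarrow> nat \<times> nat \<Rightarrow> real^'b^'b) \<Rightarrow> (nat \<times> nat) set
     \<Rightarrow> (nat \<times> nat \<Rightarrow> nat) \<Rightarrow> (nat \<times> nat \<Rightarrow> 'b \<Rightarrow> 'b \<Rightarrow> nat \<Rightarrow> nat) \<Rightarrow> (nat \<Rightarrow> nat)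
     \<Rightarrow> (nat \<Rightarrow> nat \<times> nat \<Rightarrow> real^'b^'b) \<Rightarrow> bool" where
  "async_iteration H S beta s u x \<longleftrightarrow>
     (\<forall>k\<ge>1. \<forall>ij\<in>S. x (Suc k) ij = (if beta ij = u k then H (async_mix s x k) ij else x k ij))"

lemma is_async_iter_iff_async_iteration:
  "is_async_iter A S beta s u x \<longleftrightarrow> async_iteration (bilu_H A S) S beta s u x"
  by (simp add: is_async_iter_def async_iteration_def)

lemma async_mix_nth: "async_mix s x k ab $ p $ q = x (k - s ab p q k) ab $ p $ q"
  by (simp add: async_mix_def)

lemma blockwise_close_async_mix:
  assumes "admissible_shifts S shat s" and "I \<subseteq> S" and "1 \<le> k"
    and "\<And>k'. 1 \<le> k' \<Longrightarrow> k' \<le> k \<Longrightarrow> blockwise_close I r (x k') y"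
  shows "blockwise_close I r (async_mix s x k) y"
  unfolding blockwise_close_def async_mix_nth
proof (intro ballI allI)
  fix ab p q
  assume "ab \<in> I"
  then have "s ab p q k \<le> k - 1"
    using assms(1-3) unfolding admissible_shifts_def by auto
  then have "blockwise_close I r (x (k - s ab p q k)) y"
    using assms(3,4) by simp
  with \<open>ab \<in> I\<close> show "\<bar>x (k - s ab p q k) ab $ p $ q - y ab $ p $ q\<bar> < r"
    unfolding blockwise_close_def by blast
qed

lemma async_mix_eq_if_settled:
  assumes "admissible_shifts S shat s" and "ab \<in> S" and "1 \<le> k" and "T + shat \<le> k"
    and "\<forall>k'\<ge>T. x k' ab = z"
  shows "async_mix s x k ab = z"
proof -
  have "T \<le> k - s ab p q k" for p q
  proof -
    have "s ab p q k \<le> shat"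
      using assms(1-3) unfolding admissible_shifts_def by auto
    with \<open>T + shat \<le> k\<close> show ?thesis
      by arith
  qed
  then have "x (k - s ab p q k) ab = z" for p q
    using assms(5) by blast
  then show ?thesis
    by (simp add: vec_eq_iff async_mix_nth)
qed

lemma async_iteration_stable_below_level:
  assumes tri: "level_triangular H S lev"
    and fixed: "\<forall>ij\<in>S. H xs ij = xs ij"
    and cont: "\<And>\<epsilon>. \<epsilon> > 0 \<Longrightarrow> \<exists>\<delta>>0. \<forall>z. blockwise_close S \<delta> z xs \<longrightarrow> blockwise_close S \<epsilon> (H z) (H xs)"
    and "\<epsilon> > 0"
  shows "\<exists>\<delta>>0. \<forall>s u x. admissible_shifts S shat s \<longrightarrow> async_iteration H S beta s u x
           \<longrightarrow> blockwise_close S \<delta> (x 1) xs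
           \<longrightarrow> (\<forall>k\<ge>1. blockwise_close {ab\<in>S. lev ab < L} \<epsilon> (x k) xs)"
  using \<open>\<epsilon> > 0\<close>
proof (induction L arbitrary: \<epsilon>)
  case 0
  show ?case
    by (auto simp: blockwise_close_def intro: exI[of _ 1])
next
  case (Suc L)
  obtain d where "d > 0" and d: "\<forall>z. blockwise_close S d z xs \<longrightarrow> blockwise_close S \<epsilon> (H z) (H xs)"
    using cont[OF \<open>\<epsilon> > 0\<close>] by blast
  obtain \<delta> where "\<delta> > 0" and lower_levels:
    "\<forall>s u x. admissible_shifts S shat s \<longrightarrow> async_iteration H S beta s u x
       \<longrightarrow> blockwise_close S \<delta> (x 1) xs
       \<longrightarrow> (\<forall>k\<ge>1. blockwise_close {ab\<in>S. lev ab < L} (min \<epsilon> d) (x k) xs)"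
    using Suc.IH[of "min \<epsilon> d"] \<open>d > 0\<close> Suc.prems by auto
  show ?case
  proof (intro exI[of _ "min \<delta> \<epsilon>"] conjI allI impI)
    fix s u x and k :: nat
    assume adm: "admissible_shifts S shat s" and iter: "async_iteration H S beta s u x"
      and init: "blockwise_close S (min \<delta> \<epsilon>) (x 1) xs" and "1 \<le> k"
    have low: "blockwise_close {ab\<in>S. lev ab < L} (min \<epsilon> d) (x k') xs" if "1 \<le> k'" for k'
      using lower_levels adm iter blockwise_close_mono[OF init] that by auto
    show "blockwise_close {ab\<in>S. lev ab < Suc L} \<epsilon> (x k) xs"
      using \<open>1 \<le> k\<close>
    proof (induction k rule: dec_induct)
      case base
      show ?case
        using init by (rule blockwise_close_mono) auto
    next
      case (step n)
      define z where "z c = (if lev c < L then async_mix s x n c else xs c)" for c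
      have "blockwise_close {ab\<in>S. lev ab < L} (min \<epsilon> d) (async_mix s x n) xs"
        using adm low step(1) by (intro blockwise_close_async_mix) auto
      then have "blockwise_close S d z xs"
        using \<open>d > 0\<close> unfolding blockwise_close_def z_def by fastforce
      then have Hz: "blockwise_close S \<epsilon> (H z) (H xs)"
        using d by blast
      show ?case
        unfolding blockwise_close_def
      proof (intro ballI allI)
        fix ab p q
        assume ab: "ab \<in> {ab\<in>S. lev ab < Suc L}"
        show "\<bar>x (Suc n) ab $ p $ q - xs ab $ p $ q\<bar> < \<epsilon>"
        proof (cases "beta ab = u n")
          case True
          have "H (async_mix s x n) ab = H z ab"
            using tri ab unfolding level_triangular_def z_def by auto
          with True have "x (Suc n) ab = H z ab"
            using iter step(1) ab unfolding async_iteration_def by auto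
          then show ?thesis
            using Hz fixed ab unfolding blockwise_close_def by auto
        next
          case False
          then have "x (Suc n) ab = x n ab"
            using iter step(1) ab unfolding async_iteration_def by auto
          moreover have "\<bar>x n ab $ p $ q - xs ab $ p $ q\<bar> < \<epsilon>"
            using step(3) ab unfolding blockwise_close_def by blast
          ultimately show ?thesis
            by simp
        qed
      qed
    qed
  qed (use \<open>\<delta> > 0\<close> Suc.prems in auto)
qed

lemma async_iteration_eventually_exact_below_level:
  assumes "finite S"
    and tri: "level_triangular H S lev"
    and fixed: "\<forall>ij\<in>S. H xs ij = xs ij"
    and adm: "admissible_shifts S shat s"
    and iter: "async_iteration H S beta s u x"
    and fair: "\<forall>ab\<in>S. \<forall>k. \<exists>l>k. u l = beta ab"
  shows "eventually (\<lambda>k. \<forall>ab\<in>S. lev ab < L \<longrightarrow> x k ab = xs ab) sequentially"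
proof (induction L)
  case 0
  show ?case
    by simp
next
  case (Suc L)
  then obtain T where T: "\<forall>k\<ge>T. \<forall>ab\<in>S. lev ab < L \<longrightarrow> x k ab = xs ab"
    unfolding eventually_sequentially by blast
  have exact_after_update: "x (Suc n) ab = xs ab"
    if "ab \<in> S" "lev ab < Suc L" "1 \<le> n" "T + shat \<le> n" "beta ab = u n" for ab n
  proof -
    have "async_mix s x n c = xs c" if "c \<in> S" "lev c < L" for c
      using T that \<open>1 \<le> n\<close> \<open>T + shat \<le> n\<close> by (intro async_mix_eq_if_settled[OF adm]) auto
    then have "H (async_mix s x n) ab = H xs ab"
      using tri \<open>ab \<in> S\<close> \<open>lev ab < Suc L\<close> unfolding level_triangular_def by auto
    then show ?thesis
      using iter fixed that unfolding async_iteration_def by auto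
  qed
  have "eventually (\<lambda>k. x k ab = xs ab) sequentially" if "ab \<in> S" "lev ab < Suc L" for ab
  proof -
    obtain l where "T + shat < l" "u l = beta ab"
      using fair \<open>ab \<in> S\<close> by blast
    have "x k ab = xs ab" if "Suc l \<le> k" for k
      using that
    proof (induction k rule: dec_induct)
      case base
      show ?case
        using exact_after_update \<open>ab \<in> S\<close> \<open>lev ab < Suc L\<close> \<open>T + shat < l\<close> \<open>u l = beta ab\<close> by simp
    next
      case (step n)
      show ?case
      proof (cases "beta ab = u n")
        case True
        then show ?thesis
          using exact_after_update \<open>ab \<in> S\<close> \<open>lev ab < Suc L\<close> \<open>T + shat < l\<close> step(1) by simp
      next
        case False
        then show ?thesis
          using iter \<open>ab \<in> S\<close> step unfolding async_iteration_def by auto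
      qed
    qed
    then show ?thesis
      unfolding eventually_sequentially by blast
  qed
  then show ?case
    using \<open>finite S\<close> by (auto intro: eventually_ball_finite elim!: eventually_mono)
qed

lemma async_iteration_locally_convergent:
  assumes "finite S"
    and tri: "level_triangular H S lev"
    and fixed: "\<forall>ij\<in>S. H xs ij = xs ij"
    and cont: "\<And>\<epsilon>. \<epsilon> > 0 \<Longrightarrow> \<exists>\<delta>>0. \<forall>z. blockwise_close S \<delta> z xs \<longrightarrow> blockwise_close S \<epsilon> (H z) (H xs)"
    and "\<rho> > 0"
  shows "\<exists>\<delta>>0. \<forall>s u x. admissible_shifts S shat s \<longrightarrow> (\<forall>ab\<in>S. \<forall>k. \<exists>l>k. u l = beta ab)
           \<longrightarrow> async_iteration H S beta s u x \<longrightarrow> blockwise_close S \<delta> (x 1) xs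
           \<longrightarrow> (\<forall>k\<ge>1. blockwise_close S \<rho> (async_mix s x k) xs) \<and> (\<forall>ij\<in>S. (\<lambda>k. x k ij) \<longlonglongrightarrow> xs ij)"
proof -
  define L where "L = Suc (Max (lev ` S))"
  have below_L: "lev ab < L" if "ab \<in> S" for ab
    using \<open>finite S\<close> that by (simp add: L_def le_imp_less_Suc)
  then have all_levels: "{ab\<in>S. lev ab < L} = S"
    by blast
  from async_iteration_stable_below_level[OF tri fixed cont \<open>\<rho> > 0\<close>, where L = L, unfolded all_levels]
  obtain \<delta> where "\<delta> > 0" and stable:
    "\<forall>s u x. admissible_shifts S shat s \<longrightarrow> async_iteration H S beta s u x
       \<longrightarrow> blockwise_close S \<delta> (x 1) xs \<longrightarrow> (\<forall>k\<ge>1. blockwise_close S \<rho> (x k) xs)"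
    by blast
  have "(\<forall>k\<ge>1. blockwise_close S \<rho> (async_mix s x k) xs) \<and> (\<forall>ij\<in>S. (\<lambda>k. x k ij) \<longlonglongrightarrow> xs ij)"
    if adm: "admissible_shifts S shat s" and fair: "\<forall>ab\<in>S. \<forall>k. \<exists>l>k. u l = beta ab"
      and iter: "async_iteration H S beta s u x" and init: "blockwise_close S \<delta> (x 1) xs" for s u x
  proof
    have "blockwise_close S \<rho> (x k) xs" if "1 \<le> k" for k
      using stable adm iter init that by blast
    then show "\<forall>k\<ge>1. blockwise_close S \<rho> (async_mix s x k) xs"
      using blockwise_close_async_mix[OF adm order_refl] by blast
    have "eventually (\<lambda>k. \<forall>ab\<in>S. lev ab < L \<longrightarrow> x k ab = xs ab) sequentially"
      using async_iteration_eventually_exact_below_level[OF \<open>finite S\<close> tri fixed adm iter fair] .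
    then have "eventually (\<lambda>k. x k ij = xs ij) sequentially" if "ij \<in> S" for ij
      using that below_L by (auto elim: eventually_mono)
    then show "\<forall>ij\<in>S. (\<lambda>k. x k ij) \<longlonglongrightarrow> xs ij"
      by (simp add: tendsto_eventually)
  qed
  with \<open>\<delta> > 0\<close> show ?thesis
    by blast
qed

lemma admissible_update_fair:
  assumes "admissible_update S u" and "bij_betw beta S {1..card S}"
  shows "\<forall>ab\<in>S. \<forall>k. \<exists>l>k. u l = beta ab"
proof
  fix ab
  assume "ab \<in> S"
  then have "beta ab \<in> {1..card S}"
    using bij_betw_apply[OF assms(2)] by blast
  then show "\<forall>k. \<exists>l>k. u l = beta ab"
    using assms(1) unfolding admissible_update_def by blast
qed

theorem theorem6:
  fixes A :: "nat \<times> nat \<Rightarrow> real^'b^'b" and N :: nat and S :: "(nat \<times> nat) set"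
    and beta :: "nat \<times> nat \<Rightarrow> nat" and xs :: "nat \<times> nat \<Rightarrow> real^'b^'b" and shat :: nat
  assumes "S \<subseteq> {..<N} \<times> {..<N}"
    and "\<forall>j<N. (j, j) \<in> S"
    and "bij_betw beta S {1..card S}"
    and "in_DB N xs"
    and "\<forall>ij\<in>S. bilu_H A S xs ij = xs ij"
  shows "\<exists>\<delta>>0. \<forall>s u x. admissible_shifts S shat s \<longrightarrow> admissible_update S u
           \<longrightarrow> is_async_iter A S beta s u x
           \<longrightarrow> (\<forall>ij\<in>S. dist (x 1 ij) (xs ij) < \<delta>)
           \<longrightarrow> (\<forall>k\<ge>1. in_DB N (async_mix s x k)) \<and> (\<forall>ij\<in>S. (\<lambda>k. x k ij) \<longlonglongrightarrow> xs ij)"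
proof -
  have "finite S"
    using assms(1) finite_subset by blast
  have diagonal: "(j, j) \<in> S \<and> invertible (xs (j, j))" if "(i, j) \<in> S" "j < i" for i j
    using assms(1,2,4) that by (auto simp: in_DB_def)
  then have "level_triangular (bilu_H A S) S bilu_level"
    by (intro bilu_H_level_triangular) blast
  obtain \<rho> where "\<rho> > 0" and \<rho>: "\<forall>z. blockwise_close S \<rho> z xs \<longrightarrow> in_DB N z"
    using in_DB_blockwise_neighbourhood assms(2,4) by blast
  have "\<exists>\<delta>>0. \<forall>z. blockwise_close S \<delta> z xs \<longrightarrow> blockwise_close S \<epsilon> (bilu_H A S z) (bilu_H A S xs)"
    if "\<epsilon> > 0" for \<epsilon>
    using \<open>finite S\<close> diagonal that by (rule bilu_H_blockwise_continuous)
  from async_iteration_locally_convergent[OF \<open>finite S\<close> \<open>level_triangular _ _ _\<close> assms(5) this \<open>\<rho> > 0\<close>]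
  obtain \<delta> where "\<delta> > 0" and convergent:
    "\<forall>s u x. admissible_shifts S shat s \<longrightarrow> (\<forall>ab\<in>S. \<forall>k. \<exists>l>k. u l = beta ab)
       \<longrightarrow> is_async_iter A S beta s u x \<longrightarrow> blockwise_close S \<delta> (x 1) xs
       \<longrightarrow> (\<forall>k\<ge>1. blockwise_close S \<rho> (async_mix s x k) xs) \<and> (\<forall>ij\<in>S. (\<lambda>k. x k ij) \<longlonglongrightarrow> xs ij)"
    unfolding is_async_iter_iff_async_iteration by blast
  have "(\<forall>k\<ge>1. in_DB N (async_mix s x k)) \<and> (\<forall>ij\<in>S. (\<lambda>k. x k ij) \<longlonglongrightarrow> xs ij)"
    if "admissible_shifts S shat s" "admissible_update S u" "is_async_iter A S beta s u x"
      "\<forall>ij\<in>S. dist (x 1 ij) (xs ij) < \<delta>" for s u x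
    using convergent \<rho> that admissible_update_fair[OF _ assms(3)] blockwise_close_if_dist_less by blast
  with \<open>\<delta> > 0\<close> show ?thesis
    by blast
qed

end
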